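(* In the errorless symmetric relay network described in the context, for every horizon $T\ge1$ the greedy sampling policy $G$ minimizes the average sum AoI at the relay, i.e. $G\in\arg\min_{\pi}\frac{1}{TK}\sum_{t=1}^T\sum_{k=1}^K g_k^{\pi}(t)$; equivalently, $G\in\arg\max_{\pi}\sum_{t=1}^T\sum_{\tau=1}^{t-1}R(\mathcal{S}^{\pi}(\tau))$.
   Context: Fix integers $K\ge 2$ and $S,U$ with $1\le S<K$, $1\le U<K$, and $S=U$. There are $K$ processes indexed by $k\in\{1,\dots,K\}$ and time slots $t=1,2,\dots$. The state at time $t$ consists of relay AoI values $g_k(t)$ and destination AoI values $h_k(t)$, with $g_k(1)=h_k(1)=1$ for all $k$. A policy $\pi$ is a map assigning to the current state a pair $(\mathcal{S}^{\pi}(t),\mathcal{U}^{\pi}(t))$ of subsets of $\{1,\dots,K\}$ with $|\mathcal{S}^{\pi}(t)|=S$ and $|\mathcal{U}^{\pi}(t)|=U$. Errorless dynamics: $g_k(t+1)=1$ if $k\in\mathcal{S}(t)$, else $g_k(t+1)=g_k(t)+1$; $h_k(t+1)=g_k(t)+1$ if $k\in\mathcal{U}(t)$, else $h_k(t+1)=h_k(t)+1$. Write $g_k^\pi(t)$ for the relay AoI under $\pi$ and $R(\mathcal{S}^{\pi}(\tau))=\sum_{k\in\mathcal{S}^{\pi}(\tau)} g_k^{\pi}(\tau)$. The greedy policy $G$ chooses at each time $t$ a set $\mathcal{S}^G(t)$ of $S$ indices with the largest values $g_k(t)$ (maximizing $\sum_{k\in\mathcal{S}}g_k(t)$ over $|\mathcal{S}|=S$)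 and a set $\mathcal{U}^G(t)$ of $U$ indices maximizing $\sum_{k\in\mathcal{U}}(h_k(t)-g_k(t))$. *)

theory Defs
  imports Complex_Main
begin

text \<open>State at a time slot: relay AoI g and destination AoI h, as functions of the
process index (only indices 1..K are meaningful).\<close>
type_synonym state = "(nat \<Rightarrow> nat) \<times> (nat \<Rightarrow> nat)"

text \<open>A policy maps the current state to the pair (sampled set, updated set).\<close>
type_synonym policy = "state \<Rightarrow> nat set \<times> nat set"

definition valid_policy :: "nat \<Rightarrow> nat \<Rightarrow> nat \<Rightarrow> policy \<Rightarrow> bool" where
  "valid_policy K S U pol \<longleftrightarrow>
     (\<forall>st. fst (pol st) \<subseteq> {1..K} \<and> card (fst (pol st)) = S \<and>
           snd (pol st) \<subseteq> {1..K} \<and> card (snd (pol st)) = U)"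

definition step :: "policy \<Rightarrow> state \<Rightarrow> state" where
  "step pol st =
     (let g = fst st; h = snd st; Ss = fst (pol st); Us = snd (pol st) in
       (\<lambda>k. if k \<in> Ss then 1 else g k + 1,
        \<lambda>k. if k \<in> Us then g k + 1 else h k + 1))"

text \<open>traj pol n is the state at time slot t = n + 1; at t = 1 all AoI values are 1.\<close>
fun traj :: "policy \<Rightarrow> nat \<Rightarrow> state" where
  "traj pol 0 = (\<lambda>_. 1, \<lambda>_. 1)"
| "traj pol (Suc n) = step pol (traj pol n)"

definition relay_aoi :: "policy \<Rightarrow> nat \<Rightarrow> nat \<Rightarrow> nat" where
  "relay_aoi pol k t = fst (traj pol (t - 1)) k"

definition is_greedy :: "nat \<Rightarrow> nat \<Rightarrow> nat \<Rightarrow> policy \<Rightarrow> bool" where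
  "is_greedy K S U G \<longleftrightarrow> valid_policy K S U G \<and>
     (\<forall>g h. (\<forall>A. A \<subseteq> {1..K} \<and> card A = S \<longrightarrow>
                  sum g A \<le> sum g (fst (G (g, h)))) \<and>
            (\<forall>A. A \<subseteq> {1..K} \<and> card A = U \<longrightarrow>
                  (\<Sum>k\<in>A. int (h k) - int (g k)) \<le>
                  (\<Sum>k\<in>snd (G (g, h)). int (h k) - int (g k))))"

definition avg_relay_aoi :: "nat \<Rightarrow> nat \<Rightarrow> policy \<Rightarrow> real" where
  "avg_relay_aoi K T pol =
     (\<Sum>t=1..T. \<Sum>k=1..K. real (relay_aoi pol k t)) / (real T * real K)"

end

theory Submission
  imports Defs
begin

text \<open>Count, at every slot, the processes whose relay AoI exceeds m. Only the S processes
sampled in the last slot drop out when passing from age m to age m + 1, so under any policy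
at least K - S m processes are older than m; the greedy policy always samples the oldest
ones, hence its sampled set and the set of processes older than m are nested and exactly
K - S m of them remain. Since a sum of ages is the sum over m of the number of ages
exceeding m, greedy minimizes the sum of relay AoI at every single slot.\<close>

lemma sum_nat_eq_sum_card_greater:
  fixes f :: "'a \<Rightarrow> nat"
  assumes "finite A" and "\<And>k. k \<in> A \<Longrightarrow> f k \<le> N"
  shows "sum f A = (\<Sum>m<N. card {k\<in>A. m < f k})"
proof -
  have count: "(\<Sum>m<N. if m < f k then 1 else 0) = f k" if "k \<in> A" for k
  proof -
    have "(\<Sum>m<N. if m < f k then 1 else 0) = card ({..<N} \<inter> {m. m < f k})"
      by (simp add: sum.If_cases)
    also have "{..<N} \<inter> {m. m < f k} = {..<f k}"
      using assms(2)[OF that] by auto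
    finally show ?thesis by simp
  qed
  have "sum f A = (\<Sum>k\<in>A. \<Sum>m<N. if m < f k then 1 else 0)"
    by (simp add: count)
  also have "\<dots> = (\<Sum>m<N. \<Sum>k\<in>A. if m < f k then 1 else 0)"
    by (rule sum.swap)
  also have "\<dots> = (\<Sum>m<N. card {k\<in>A. m < f k})"
    using assms(1) by (simp add: sum.If_cases Int_def)
  finally show ?thesis .
qed

lemma fst_traj_Suc:
  "fst (traj pol (Suc n)) k = (if k \<in> fst (pol (traj pol n)) then 1 else fst (traj pol n) k + 1)"
  by (simp add: step_def Let_def)

lemma fst_traj_bounds: "1 \<le> fst (traj pol n) k \<and> fst (traj pol n) k \<le> Suc n"
  by (induction n arbitrary: k) (simp, auto simp: fst_traj_Suc simp del: traj.simps)

definition older_than :: "nat \<Rightarrow> policy \<Rightarrow> nat \<Rightarrow> nat \<Rightarrow> nat set" where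
  "older_than K pol n m = {k \<in> {1..K}. m < fst (traj pol n) k}"

lemma older_than_0: "older_than K pol n 0 = {1..K}"
  using fst_traj_bounds[of pol n] by (auto simp: older_than_def Suc_le_eq)

lemma older_than_Suc_Suc:
  "older_than K pol (Suc n) (Suc m) = older_than K pol n m - fst (pol (traj pol n))"
  by (auto simp: older_than_def fst_traj_Suc simp del: traj.simps)

lemma valid_policy_sampled:
  "valid_policy K S U pol \<Longrightarrow> fst (pol st) \<subseteq> {1..K} \<and> card (fst (pol st)) = S"
  unfolding valid_policy_def by blast

lemma card_older_than_ge:
  assumes "valid_policy K S U pol" and "m \<le> n"
  shows "K - S * m \<le> card (older_than K pol n m)"
  using assms(2)
proof (induction m arbitrary: n)
  case 0
  then show ?case by (simp add: older_than_0)
next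
  case (Suc m)
  then obtain n' where n: "n = Suc n'" and "m \<le> n'"
    by (cases n) auto
  let ?A = "fst (pol (traj pol n'))"
  have A: "?A \<subseteq> {1..K}" "card ?A = S"
    using valid_policy_sampled[OF assms(1)] by auto
  have "K - S * Suc m = (K - S * m) - S"
    by simp
  also have "\<dots> \<le> card (older_than K pol n' m) - card ?A"
    using Suc.IH[OF \<open>m \<le> n'\<close>] A(2) by simp
  also have "\<dots> \<le> card (older_than K pol n (Suc m))"
    using diff_card_le_card_Diff[OF finite_subset[OF A(1)]] by (simp add: n older_than_Suc_Suc)
  finally show ?case .
qed

lemma greedy_sampled_oldest:
  assumes gr: "is_greedy K S U G" and x: "x \<in> fst (G (g, h))"
    and y: "y \<in> {1..K}" "y \<notin> fst (G (g, h))"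
  shows "g y \<le> g x"
proof -
  let ?B = "fst (G (g, h))"
  let ?A = "insert y (?B - {x})"
  have B: "?B \<subseteq> {1..K}" "card ?B = S"
    using gr by (auto simp: is_greedy_def valid_policy_def)
  then have fin: "finite ?B"
    using finite_subset by blast
  have "card ?B > 0"
    using fin x card_gt_0_iff by blast
  then have "?A \<subseteq> {1..K}" "card ?A = S"
    using B fin x y by (auto simp: card_Diff_singleton)
  then have "sum g ?A \<le> sum g ?B"
    using gr by (auto simp: is_greedy_def)
  moreover have "sum g ?A = g y + sum g (?B - {x})"
    using fin y by simp
  moreover have "sum g ?B = g x + sum g (?B - {x})"
    using fin x by (simp add: sum.remove)
  ultimately show ?thesis by simp
qed

lemma card_older_than_greedy_Suc:
  assumes gr: "is_greedy K S U G"
  shows "card (older_than K G (Suc n) (Suc m)) = card (older_than K G n m) - S"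
proof -
  obtain g h where st: "traj G n = (g, h)"
    by fastforce
  let ?A = "fst (G (g, h))" and ?X = "older_than K G n m"
  have A: "?A \<subseteq> {1..K}" "card ?A = S"
    using gr by (auto simp: is_greedy_def valid_policy_def)
  have X: "?X = {k \<in> {1..K}. m < g k}"
    by (simp add: older_than_def st)
  have nested: "?A \<subseteq> ?X \<or> ?X \<subseteq> ?A"
  proof (rule disjCI)
    assume "\<not> ?X \<subseteq> ?A"
    then obtain y where "y \<in> {1..K}" "y \<notin> ?A" "m < g y"
      using X by auto
    then show "?A \<subseteq> ?X"
      using A(1) X greedy_sampled_oldest[OF gr] by fastforce
  qed
  have "finite ?A"
    using A(1) finite_subset by blast
  with nested have "card (?X - ?A) = card ?X - card ?A"
    by (auto simp: card_Diff_subset card_mono Diff_eq_empty_iff[THEN iffD2])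
  then show ?thesis
    by (simp add: older_than_Suc_Suc st A(2))
qed

lemma card_older_than_greedy:
  assumes "is_greedy K S U G" and "m \<le> n"
  shows "card (older_than K G n m) = K - S * m"
  using assms(2)
proof (induction m arbitrary: n)
  case 0
  then show ?case by (simp add: older_than_0)
next
  case (Suc m)
  then obtain n' where "n = Suc n'" and "m \<le> n'"
    by (cases n) auto
  then show ?case
    using Suc.IH card_older_than_greedy_Suc[OF assms(1)] by (simp add: diff_diff_left)
qed

lemma greedy_relay_sum_le:
  assumes "is_greedy K S U G" and "valid_policy K S U pol"
  shows "(\<Sum>k=1..K. fst (traj G n) k) \<le> (\<Sum>k=1..K. fst (traj pol n) k)"
proof -
  have layers: "(\<Sum>k=1..K. fst (traj p n) k) = (\<Sum>m<Suc n. card (older_than K p n m))" for p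
    unfolding older_than_def using fst_traj_bounds
    by (intro sum_nat_eq_sum_card_greater) auto
  have "(\<Sum>m<Suc n. card (older_than K G n m)) \<le> (\<Sum>m<Suc n. card (older_than K pol n m))"
    using card_older_than_greedy[OF assms(1)] card_older_than_ge[OF assms(2)]
    by (intro sum_mono) simp
  then show ?thesis
    by (simp only: layers)
qed

theorem proposition2:
  fixes K S U T :: nat and G :: policy
  assumes "K \<ge> 2" and "1 \<le> S" and "S < K" and "1 \<le> U" and "U < K" and "S = U"
    and "is_greedy K S U G" and "T \<ge> 1"
  shows "\<forall>pol. valid_policy K S U pol \<longrightarrow> avg_relay_aoi K T G \<le> avg_relay_aoi K T pol"
proof (intro allI impI)
  fix pol assume pol: "valid_policy K S U pol"
  have "(\<Sum>k=1..K. real (relay_aoi G k t)) \<le> (\<Sum>k=1..K. real (relay_aoi pol k t))" for t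
    using greedy_relay_sum_le[OF assms(7) pol, of "t - 1"]
    unfolding relay_aoi_def of_nat_sum[symmetric] of_nat_le_iff .
  then have "(\<Sum>t=1..T. \<Sum>k=1..K. real (relay_aoi G k t))
      \<le> (\<Sum>t=1..T. \<Sum>k=1..K. real (relay_aoi pol k t))"
    by (rule sum_mono)
  then show "avg_relay_aoi K T G \<le> avg_relay_aoi K T pol"
    unfolding avg_relay_aoi_def using assms(1,8) by (simp add: divide_right_mono)
qed

end
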